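(* Let $(V_1,\dots,V_n)$ be an $n$-tuple of doubly non-commuting isometries on $H$ and let $1\le l\le n$. If $V_1,\dots,V_l$ are pure isometries and $\dim\big(\bigcap_{i=1}^l\ker V_i^*\big)<\infty$, then $V_{l+1},\dots,V_n$ are unitary operators on $H$.
   Context: Fix $n\ge1$ and $z_{ij}\in\mathbb T$ ($i\ne j$) with $z_{ji}=\overline{z_{ij}}$; $(V_1,\dots,V_n)$ is doubly non-commuting if the $V_i$ are isometries with $V_i^*V_j=\overline{z_{ij}}V_jV_i^*$ for $i\ne j$. An isometry $S$ on $H$ is a pure isometry if $\{0\}$ is the only $S$-invariant subspace of $H$ on which $S$ is unitary. *)

theory Defs
  imports "HOL-Analysis.Analysis"
begin

text \<open>Complex Hilbert spaces: a real Banach space with a complex scalar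
multiplication and a complex inner product (linear in the first argument)
inducing the norm.\<close>

class chilbert = real_normed_vector + complete_space +
  fixes cscale :: "complex \<Rightarrow> 'a \<Rightarrow> 'a"
    and cinner :: "'a \<Rightarrow> 'a \<Rightarrow> complex"
  assumes cscale_of_real: "cscale (complex_of_real r) x = scaleR r x"
    and cscale_add_right: "cscale c (x + y) = cscale c x + cscale c y"
    and cscale_add_left: "cscale (a + b) x = cscale a x + cscale b x"
    and cscale_cscale: "cscale a (cscale b x) = cscale (a * b) x"
    and cscale_one: "cscale 1 x = x"
    and cinner_add_left: "cinner (x + y) z = cinner x z + cinner y z"
    and cinner_cscale_left: "cinner (cscale c x) y = c * cinner x y"
    and cinner_commute: "cinner y x = cnj (cinner x y)"
    and cinner_self: "cinner x x = complex_of_real ((norm x)\<^sup>2)"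

definition bounded_clop :: "('a::chilbert \<Rightarrow> 'a) \<Rightarrow> bool" where
  "bounded_clop T \<longleftrightarrow> (\<forall>x y. T (x + y) = T x + T y) \<and>
     (\<forall>c x. T (cscale c x) = cscale c (T x)) \<and> (\<exists>K. \<forall>x. norm (T x) \<le> K * norm x)"

definition adj :: "('a::chilbert \<Rightarrow> 'a) \<Rightarrow> 'a \<Rightarrow> 'a" where
  "adj T = (SOME S. bounded_clop S \<and> (\<forall>x y. cinner (T x) y = cinner x (S y)))"

definition isometry :: "('a::chilbert \<Rightarrow> 'a) \<Rightarrow> bool" where
  "isometry V \<longleftrightarrow> bounded_clop V \<and> adj V \<circ> V = id"

definition unitary :: "('a::chilbert \<Rightarrow> 'a) \<Rightarrow> bool" where
  "unitary U \<longleftrightarrow> bounded_clop U \<and> adj U \<circ> U = id \<and> U \<circ> adj U = id"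

definition csubspace :: "'a::chilbert set \<Rightarrow> bool" where
  "csubspace M \<longleftrightarrow> 0 \<in> M \<and> (\<forall>x\<in>M. \<forall>y\<in>M. x + y \<in> M) \<and> (\<forall>c. \<forall>x\<in>M. cscale c x \<in> M)"

definition closed_csubspace :: "'a::chilbert set \<Rightarrow> bool" where
  "closed_csubspace M \<longleftrightarrow> csubspace M \<and> closed M"

text \<open>Pure isometry: the only invariant (closed) subspace on which S is unitary
  (i.e. S maps it onto itself) is the zero subspace.\<close>
definition pure_isometry :: "('a::chilbert \<Rightarrow> 'a) \<Rightarrow> bool" where
  "pure_isometry S \<longleftrightarrow> isometry S \<and>
     (\<forall>M. closed_csubspace M \<and> S ` M = M \<longrightarrow> M = {0})"

definition cspan :: "'a::chilbert set \<Rightarrow> 'a set" where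
  "cspan B = {y. \<exists>F c. finite F \<and> F \<subseteq> B \<and> y = (\<Sum>b\<in>F. cscale (c b) b)}"

definition finite_cdim :: "'a::chilbert set \<Rightarrow> bool" where
  "finite_cdim M \<longleftrightarrow> (\<exists>B. finite B \<and> cspan B = M)"

definition doubly_noncommuting ::
    "nat \<Rightarrow> (nat \<Rightarrow> nat \<Rightarrow> complex) \<Rightarrow> (nat \<Rightarrow> 'a::chilbert \<Rightarrow> 'a) \<Rightarrow> bool" where
  "doubly_noncommuting n z V \<longleftrightarrow>
     (\<forall>i\<in>{1..n}. isometry (V i)) \<and>
     (\<forall>i\<in>{1..n}. \<forall>j\<in>{1..n}. i \<noteq> j \<longrightarrow>
        norm (z i j) = 1 \<and> z j i = cnj (z i j) \<and>
        adj (V i) \<circ> V j = (\<lambda>x. cscale (cnj (z i j)) (V j (adj (V i) x))))"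

end

theory Submission
  imports Defs
begin

text \<open>Let \<open>j > l\<close>. The doubly non-commuting relations make \<open>ker V\<^sub>j\<^sup>*\<close> reducing for
  \<open>V\<^sub>1, \<dots>, V\<^sub>l\<close> and make \<open>W = \<Inter>\<^sub>i\<^sub>\<le>\<^sub>l ker V\<^sub>i\<^sup>*\<close> invariant under \<open>V\<^sub>j\<close>. If \<open>ker V\<^sub>j\<^sup>* \<noteq> 0\<close>,
  peeling off one pure isometry at a time (a pure isometry has a wandering vector in
  every nonzero reducing subspace) produces a nonzero \<open>x \<in> ker V\<^sub>j\<^sup>* \<inter> W\<close>. But \<open>V\<^sub>j\<close> is
  injective and \<open>W\<close> is finite-dimensional, so \<open>V\<^sub>j\<close> maps \<open>W\<close> onto itself; writing
  \<open>x = V\<^sub>j w\<close> gives \<open>w = V\<^sub>j\<^sup>* x = 0\<close>, a contradiction. Hence \<open>ker V\<^sub>j\<^sup>* = 0\<close>, i.e.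
  \<open>V\<^sub>j V\<^sub>j\<^sup>* = I\<close>.\<close>

interpretation cvs: vector_space "cscale :: complex \<Rightarrow> 'a::chilbert \<Rightarrow> 'a"
  by unfold_locales (auto simp: cscale_add_right cscale_add_left cscale_cscale cscale_one)

interpretation cvs_pair:
  vector_space_pair "cscale :: complex \<Rightarrow> 'a::chilbert \<Rightarrow> 'a" "cscale :: complex \<Rightarrow> 'a \<Rightarrow> 'a"
  by unfold_locales

lemma scaleR_eq_cscale: "scaleR r (x::'a::chilbert) = cscale (complex_of_real r) x"
  by (simp add: cscale_of_real)

lemma cinner_zero_left [simp]: "cinner 0 y = 0"
  using cinner_add_left[of 0 0 y] by simp

lemma cinner_minus_left: "cinner (- x) y = - cinner x y"
  using cinner_add_left[of x "-x" y] by (simp add: add_eq_0_iff)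

lemma cinner_diff_left: "cinner (x - y) z = cinner x z - cinner y z"
  using cinner_add_left[of x "-y" z] by (simp add: cinner_minus_left)

lemma cinner_add_right: "cinner x (y + z) = cinner x y + cinner x z"
  by (metis cinner_add_left cinner_commute complex_cnj_add)

lemma cinner_diff_right: "cinner x (y - z) = cinner x y - cinner x z"
  by (metis cinner_diff_left cinner_commute complex_cnj_diff)

lemma cinner_zero_right [simp]: "cinner x 0 = 0"
  by (metis cinner_commute cinner_zero_left complex_cnj_zero)

lemma cinner_minus_right: "cinner x (- y) = - cinner x y"
  using cinner_diff_right[of x 0 y] by simp

lemma cinner_cscale_right: "cinner x (cscale c y) = cnj c * cinner x y"
  by (metis cinner_commute cinner_cscale_left complex_cnj_mult complex_cnj_cnj)

lemma cinner_self_eq_0: "cinner x x = 0 \<longleftrightarrow> x = 0"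
  by (simp add: cinner_self)

lemma cinner_right_ext: "(\<And>x. cinner x y = cinner x w) \<Longrightarrow> y = w"
  by (metis cinner_diff_right cinner_self_eq_0 right_minus_eq)

lemma Re_cinner_self: "Re (cinner x x) = (norm x)\<^sup>2"
  by (simp only: cinner_self Re_complex_of_real)

lemma norm_add_square: "(norm (x + y :: 'a::chilbert))\<^sup>2 = (norm x)\<^sup>2 + (norm y)\<^sup>2 + 2 * Re (cinner x y)"
proof -
  have "cinner (x + y) (x + y) = cinner x x + cinner x y + cnj (cinner x y) + cinner y y"
    by (simp add: cinner_add_left cinner_add_right cinner_commute[of x y])
  then show ?thesis
    by (simp add: Re_cinner_self[symmetric])
qed

lemma parallelogram_law:
  "(norm (a - b :: 'a::chilbert))\<^sup>2 + (norm (a + b))\<^sup>2 = 2 * (norm a)\<^sup>2 + 2 * (norm b)\<^sup>2"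
  using norm_add_square[of a b] norm_add_square[of a "-b"] by (simp add: cinner_minus_right)

lemma norm_cscale: "norm (cscale c x) = cmod c * norm x"
proof -
  have "(norm (cscale c x))\<^sup>2 = Re (complex_of_real ((cmod c)\<^sup>2) * cinner x x)"
    by (simp only: Re_cinner_self[symmetric] cinner_cscale_left cinner_cscale_right
        mult.assoc mult.left_commute complex_norm_square)
  also have "\<dots> = (cmod c * norm x)\<^sup>2"
    by (simp add: Re_cinner_self power_mult_distrib)
  finally show ?thesis by (simp add: power2_eq_iff_nonneg)
qed

lemma norm_diff_projection_square:
  assumes "y \<noteq> 0"
  shows "(norm (x - cscale (cinner x y / complex_of_real ((norm y)\<^sup>2)) y))\<^sup>2
       = (norm x)\<^sup>2 - (cmod (cinner x y))\<^sup>2 / (norm y)\<^sup>2"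
proof -
  define a where "a = cinner x y"
  define t where "t = a / complex_of_real ((norm y)\<^sup>2)"
  have ny: "norm y > 0" using assms by simp
  have e: "x - cscale t y = x + cscale (-t) y"
    by (metis add_uminus_conv_diff cvs.scale_minus_left)
  have "(norm (x + cscale (-t) y))\<^sup>2 = (norm x)\<^sup>2 + (cmod t * norm y)\<^sup>2 + 2 * Re (cnj (-t) * a)"
    by (simp only: norm_add_square norm_cscale cinner_cscale_right a_def norm_minus_cancel)
  also have "cmod t = cmod a / (norm y)\<^sup>2" by (simp add: t_def norm_divide norm_power)
  also have "cnj (-t) * a = - complex_of_real ((cmod a)\<^sup>2 / (norm y)\<^sup>2)"
    by (simp add: t_def complex_norm_square[symmetric] mult.commute)
  finally show ?thesis
    using ny by (simp add: e a_def t_def power_divide power2_eq_square field_simps)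
qed

lemma cinner_cauchy_schwarz: "cmod (cinner x y) \<le> norm x * norm y"
proof (cases "y = 0")
  case False
  have "0 \<le> (norm x)\<^sup>2 - (cmod (cinner x y))\<^sup>2 / (norm y)\<^sup>2"
    using norm_diff_projection_square[OF False, of x] by (metis zero_le_power2)
  then have "(cmod (cinner x y))\<^sup>2 \<le> (norm x * norm y)\<^sup>2"
    using False by (simp add: field_simps power_mult_distrib)
  then show ?thesis by (simp add: power2_le_iff_abs_le)
qed simp

lemma csubspace_scaleR: "csubspace N \<Longrightarrow> x \<in> N \<Longrightarrow> scaleR r x \<in> N"
  unfolding csubspace_def scaleR_eq_cscale by blast

lemma csubspace_diff: "csubspace N \<Longrightarrow> x \<in> N \<Longrightarrow> y \<in> N \<Longrightarrow> x - y \<in> N"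
  unfolding csubspace_def by (metis add_uminus_conv_diff cscale_one cvs.scale_minus_left)

lemma closed_csubspace_Int:
  "closed_csubspace D \<Longrightarrow> closed_csubspace E \<Longrightarrow> closed_csubspace (D \<inter> E)"
  unfolding closed_csubspace_def csubspace_def by auto

lemma bounded_clop_add: "bounded_clop T \<Longrightarrow> T (x + y) = T x + T y"
  by (simp add: bounded_clop_def)

lemma bounded_clop_cscale: "bounded_clop T \<Longrightarrow> T (cscale c x) = cscale c (T x)"
  by (simp add: bounded_clop_def)

lemma bounded_clop_zero: "bounded_clop T \<Longrightarrow> T 0 = 0"
  using bounded_clop_add[of T 0 0] by simp

lemma bounded_clop_diff: "bounded_clop T \<Longrightarrow> T (x - y) = T x - T y"
  using bounded_clop_add[of T "x - y" y] by (simp add: eq_diff_eq)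

lemma bounded_clop_imp_bounded_linear: "bounded_clop T \<Longrightarrow> bounded_linear T"
  unfolding bounded_clop_def
  by (elim conjE exE, rule_tac K=K in bounded_linear_intro) (auto simp: scaleR_eq_cscale mult.commute)

lemma bounded_clop_imp_linear: "bounded_clop T \<Longrightarrow> Vector_Spaces.linear cscale cscale T"
  by (rule Vector_Spaces.linear_iff[THEN iffD2])
    (use cvs.vector_space_axioms in \<open>auto simp: bounded_clop_def\<close>)

lemma closed_csubspace_kernel:
  assumes "bounded_clop T"
  shows "closed_csubspace {x. T x = 0}"
proof -
  have "isCont T x" for x
    using bounded_clop_imp_bounded_linear[OF assms] by (simp add: linear_continuous_at)
  then have "closed (T -` {0})" by (intro continuous_closed_vimage) auto
  then show ?thesis
    using bounded_clop_zero[OF assms] bounded_clop_add[OF assms] bounded_clop_cscale[OF assms]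
    by (auto simp: closed_csubspace_def csubspace_def vimage_def)
qed

section \<open>Orthogonal projection onto a closed subspace\<close>

lemma norm_diff_square_le_of_dist_lower_bound:
  assumes N: "csubspace N" and d: "0 \<le> d" and d_le: "\<And>m. m \<in> N \<Longrightarrow> d \<le> norm (x - m)"
    and a: "a \<in> N" and b: "b \<in> N"
  shows "(norm (a - b))\<^sup>2 \<le> 2 * (norm (x - a))\<^sup>2 + 2 * (norm (x - b))\<^sup>2 - 4 * d\<^sup>2"
proof -
  have "scaleR (1/2) (a + b) \<in> N"
    using N a b by (intro csubspace_scaleR) (auto simp: csubspace_def)
  then have "2 * d \<le> norm (scaleR 2 (x - scaleR (1/2) (a + b)))"
    using d_le by simp
  also have "scaleR 2 (x - scaleR (1/2) (a + b)) = (x - a) + (x - b)"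
    by (simp add: algebra_simps scaleR_2)
  finally have "4 * d\<^sup>2 \<le> (norm ((x - a) + (x - b)))\<^sup>2"
    using d power_mono[of "2 * d" _ 2] by (simp add: power_mult_distrib)
  moreover have "(norm (b - a))\<^sup>2 + (norm ((x - a) + (x - b)))\<^sup>2
      = 2 * (norm (x - a))\<^sup>2 + 2 * (norm (x - b))\<^sup>2"
    using parallelogram_law[of "x - a" "x - b"] by simp
  ultimately show ?thesis by (simp add: norm_minus_commute)
qed

lemma minimizing_sequence_Cauchy:
  assumes N: "csubspace N" and d: "0 \<le> d" and d_le: "\<And>m. m \<in> N \<Longrightarrow> d \<le> norm (x - m)"
    and sN: "\<And>k. s k \<in> N" and sb: "\<And>k. (norm (x - s k))\<^sup>2 < d\<^sup>2 + inverse (real (Suc k))"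
  shows "Cauchy s"
proof (rule metric_CauchyI)
  fix e :: real assume e: "0 < e"
  obtain M :: nat where "4 / e\<^sup>2 < real M" using reals_Archimedean2 by blast
  then have M: "4 * inverse (real (Suc M)) < e\<^sup>2"
    using e by (simp add: field_simps) (smt (verit) zero_less_power)
  have "dist (s m) (s k) < e" if "M \<le> m" "M \<le> k" for m k
  proof -
    have "inverse (real (Suc m)) \<le> inverse (real (Suc M))"
      "inverse (real (Suc k)) \<le> inverse (real (Suc M))"
      using that by (simp_all add: le_imp_inverse_le)
    then have "(norm (s m - s k))\<^sup>2 < e\<^sup>2"
      using norm_diff_square_le_of_dist_lower_bound[OF N d d_le sN sN, of m k] sb[of m] sb[of k] M
      by linarith
    then show ?thesis using e by (simp add: dist_norm power_less_imp_less_base)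
  qed
  then show "\<exists>M. \<forall>m\<ge>M. \<forall>n\<ge>M. dist (s m) (s n) < e" by blast
qed

lemma closest_point_exists:
  assumes "closed_csubspace N"
  shows "\<exists>m\<in>N. \<forall>n\<in>N. norm (x - m) \<le> norm (x - n)"
proof -
  have N: "csubspace N" and cl: "closed N" using assms by (auto simp: closed_csubspace_def)
  define d where "d = Inf ((\<lambda>m. norm (x - m)) ` N)"
  have ne: "(\<lambda>m. norm (x - m)) ` N \<noteq> {}" using N by (auto simp: csubspace_def)
  have bdd: "bdd_below ((\<lambda>m. norm (x - m)) ` N)" by (auto intro: bdd_belowI[of _ 0])
  have d_le: "\<And>m. m \<in> N \<Longrightarrow> d \<le> norm (x - m)"
    unfolding d_def using bdd by (auto intro: cInf_lower)
  have d: "0 \<le> d" unfolding d_def using ne by (intro cInf_greatest) auto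
  have "\<exists>m\<in>N. (norm (x - m))\<^sup>2 < d\<^sup>2 + inverse (real (Suc k))" for k
  proof -
    have "Inf ((\<lambda>m. norm (x - m)) ` N) < sqrt (d\<^sup>2 + inverse (real (Suc k)))"
      unfolding d_def[symmetric] by (intro real_less_rsqrt) simp
    then obtain m where "m \<in> N" "norm (x - m) < sqrt (d\<^sup>2 + inverse (real (Suc k)))"
      using cInf_less_iff[OF ne bdd] by blast
    then show ?thesis
      by (metis norm_ge_zero real_sqrt_less_iff real_sqrt_pow2_iff real_sqrt_power)
  qed
  then obtain s where sN: "\<And>k. s k \<in> N"
    and sb: "\<And>k. (norm (x - s k))\<^sup>2 < d\<^sup>2 + inverse (real (Suc k))"
    by metis
  obtain m where lim: "s \<longlonglongrightarrow> m"
    using minimizing_sequence_Cauchy[OF N d d_le sN sb] Cauchy_convergent convergent_def by blast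
  have mN: "m \<in> N" using closed_sequentially[OF cl] sN lim by blast
  have "(\<lambda>k. (norm (x - s k))\<^sup>2) \<longlonglongrightarrow> (norm (x - m))\<^sup>2"
    by (intro tendsto_intros lim)
  moreover have "(\<lambda>k. d\<^sup>2 + inverse (real (Suc k))) \<longlonglongrightarrow> d\<^sup>2 + 0"
    by (intro tendsto_intros LIMSEQ_inverse_real_of_nat)
  ultimately have "(norm (x - m))\<^sup>2 \<le> d\<^sup>2 + 0"
    by (rule LIMSEQ_le) (use sb less_imp_le in blast)
  then have "norm (x - m) \<le> d" using d by (simp add: power2_le_iff_abs_le)
  then show ?thesis using mN d_le by (meson order_trans)
qed

lemma closest_point_orthogonal:
  assumes N: "csubspace N" and m: "m \<in> N" and closest: "\<forall>n\<in>N. norm (x - m) \<le> norm (x - n)"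
    and n: "n \<in> N"
  shows "cinner (x - m) n = 0"
proof (cases "n = 0")
  case False
  define t where "t = cinner (x - m) n / complex_of_real ((norm n)\<^sup>2)"
  have "m + cscale t n \<in> N" using N m n by (auto simp: csubspace_def)
  then have "norm (x - m) \<le> norm ((x - m) - cscale t n)"
    using closest by (metis diff_diff_eq)
  then have "(norm (x - m))\<^sup>2 \<le> (norm ((x - m) - cscale t n))\<^sup>2" by (simp add: power_mono)
  also have "\<dots> = (norm (x - m))\<^sup>2 - (cmod (cinner (x - m) n))\<^sup>2 / (norm n)\<^sup>2"
    unfolding t_def by (rule norm_diff_projection_square[OF False])
  finally show ?thesis using False by (simp add: divide_le_0_iff)
qed simp

lemma orthogonal_decomposition:
  assumes "closed_csubspace N"
  shows "\<exists>m\<in>N. \<forall>n\<in>N. cinner (x - m) n = 0"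
  using closest_point_exists[OF assms, of x] closest_point_orthogonal[of N]
    assms by (auto simp: closed_csubspace_def)

section \<open>Riesz representation and adjoints\<close>

lemma riesz_representation:
  fixes f :: "'a::chilbert \<Rightarrow> complex"
  assumes add: "\<And>x y. f (x + y) = f x + f y"
    and sc: "\<And>c x. f (cscale c x) = c * f x"
    and bd: "\<And>x. cmod (f x) \<le> K * norm x"
  shows "\<exists>w. \<forall>x. f x = cinner x w"
proof (cases "\<forall>x. f x = 0")
  case True then show ?thesis by (intro exI[of _ 0]) simp
next
  case False
  then obtain x0 where fx0: "f x0 \<noteq> 0" by blast
  have f0: "f 0 = 0" using add[of 0 0] by simp
  have "bounded_linear f"
    by (rule bounded_linear_intro[where K=K])
      (use add sc bd in \<open>auto simp: scaleR_eq_cscale scaleR_conv_of_real mult.commute\<close>)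
  then have "closed (f -` {0})"
    by (intro continuous_closed_vimage) (auto simp: linear_continuous_at)
  moreover have "csubspace (f -` {0})"
    unfolding csubspace_def using f0 add sc by auto
  ultimately have "closed_csubspace {x. f x = 0}" by (simp add: closed_csubspace_def vimage_def)
  from orthogonal_decomposition[OF this, of x0] obtain m where m: "f m = 0"
    and orth: "\<And>n. f n = 0 \<Longrightarrow> cinner (x0 - m) n = 0" by auto
  define u where "u = x0 - m"
  have fu: "f u \<noteq> 0" using fx0 m add[of "x0 - m" m] by (simp add: u_def)
  then have cu: "cinner u u \<noteq> 0" using f0 cinner_self_eq_0 by metis
  have key: "f x = cinner x u * (f u / cinner u u)" for x
  proof -
    define t where "t = f x / f u"
    have "f (x - cscale t u) = 0"
      using fu add[of "x - cscale t u" "cscale t u"] by (simp add: sc t_def)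
    then have "cinner (x - cscale t u) u = 0"
      using orth u_def by (metis cinner_commute complex_cnj_zero)
    then have "cinner x u = t * cinner u u" by (simp add: cinner_diff_left cinner_cscale_left)
    then show ?thesis using fu cu by (simp add: t_def)
  qed
  have "cinner x (cscale (cnj (f u / cinner u u)) u) = cinner x u * (f u / cinner u u)" for x
    by (simp add: cinner_cscale_right)
  then show ?thesis using key by metis
qed

lemma adjoint_exists:
  assumes T: "bounded_clop T"
  shows "\<exists>S. bounded_clop S \<and> (\<forall>x y. cinner (T x) y = cinner x (S y))"
proof -
  obtain K where tb: "\<And>x. norm (T x) \<le> K * norm x"
    using T unfolding bounded_clop_def by blast
  have tb': "norm (T x) \<le> \<bar>K\<bar> * norm x" for x
    using tb[of x] by (meson abs_ge_self mult_right_mono norm_ge_zero order_trans)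
  have bound: "cmod (cinner (T x) y) \<le> \<bar>K\<bar> * norm y * norm x" for x y
  proof -
    have "cmod (cinner (T x) y) \<le> norm (T x) * norm y" by (rule cinner_cauchy_schwarz)
    also have "\<dots> \<le> \<bar>K\<bar> * norm x * norm y" by (rule mult_right_mono[OF tb' norm_ge_zero])
    finally show ?thesis by (simp only: mult_ac)
  qed
  have ex: "\<exists>w. \<forall>x. cinner (T x) y = cinner x w" for y
    by (rule riesz_representation[where K="\<bar>K\<bar> * norm y", OF _ _ bound])
      (simp_all only: bounded_clop_add[OF T] bounded_clop_cscale[OF T] cinner_add_left
        cinner_cscale_left)
  define S where "S y = (SOME w. \<forall>x. cinner (T x) y = cinner x w)" for y
  have S: "cinner (T x) y = cinner x (S y)" for x y
    unfolding S_def using someI_ex[OF ex[of y]] by blast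
  have "norm (S y) \<le> \<bar>K\<bar> * norm y" for y
  proof -
    have "(norm (S y))\<^sup>2 = Re (cinner (T (S y)) y)" by (simp add: S Re_cinner_self)
    also have "\<dots> \<le> \<bar>K\<bar> * norm y * norm (S y)"
      using bound[of "S y" y] complex_Re_le_cmod[of "cinner (T (S y)) y"] by linarith
    finally have "norm (S y) * norm (S y) \<le> (\<bar>K\<bar> * norm y) * norm (S y)"
      by (simp add: power2_eq_square mult_ac)
    then show ?thesis
      by (cases "norm (S y) = 0") (auto intro: mult_right_le_imp_le)
  qed
  moreover have "S (y1 + y2) = S y1 + S y2" for y1 y2
    by (rule cinner_right_ext) (simp add: S[symmetric] cinner_add_right)
  moreover have "S (cscale c y) = cscale c (S y)" for c y
    by (rule cinner_right_ext) (simp add: S[symmetric] cinner_cscale_right)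
  ultimately have "bounded_clop S" unfolding bounded_clop_def by blast
  then show ?thesis using S by blast
qed

lemma
  assumes "bounded_clop T"
  shows bounded_clop_adj: "bounded_clop (adj T)"
    and cinner_adj_right: "cinner (T x) y = cinner x (adj T y)"
proof -
  have "bounded_clop (adj T) \<and> (\<forall>x y. cinner (T x) y = cinner x (adj T y))"
    unfolding adj_def by (rule someI_ex[OF adjoint_exists[OF assms]])
  then show "bounded_clop (adj T)" "cinner (T x) y = cinner x (adj T y)" by blast+
qed

section \<open>Injective operators on finite-dimensional invariant subspaces\<close>

lemma cspan_eq_span: "cspan B = cvs.span B"
  unfolding cspan_def cvs.span_explicit by blast

lemma finite_cdim_invariant_subset_image:
  assumes fd: "finite_cdim W" and T: "bounded_clop T" and inj: "inj T"
    and inv: "\<forall>w\<in>W. T w \<in> W"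
  shows "W \<subseteq> T ` W"
proof -
  obtain B where fin: "finite B" and WB: "W = cvs.span B"
    using fd unfolding finite_cdim_def cspan_eq_span by blast
  obtain C where CW: "C \<subseteq> W" and indC: "cvs.independent C" and WC: "W \<subseteq> cvs.span C"
    by (rule cvs.basis_exists[of W])
  have finC: "finite C"
    using cvs.independent_span_bound[OF fin indC CW[unfolded WB]] by simp
  have lin: "Vector_Spaces.linear cscale cscale T" by (rule bounded_clop_imp_linear[OF T])
  have indTC: "cvs.independent (T ` C)"
    by (rule cvs_pair.linear_independent_injective_image[OF lin indC])
      (use inj in \<open>blast intro: inj_on_subset\<close>)
  have cardTC: "card (T ` C) = card C" using inj by (simp add: card_image inj_on_subset)
  have WTC: "W \<subseteq> cvs.span (T ` C)"
  proof
    fix y assume yW: "y \<in> W"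
    show "y \<in> cvs.span (T ` C)"
    proof (rule ccontr)
      assume ny: "y \<notin> cvs.span (T ` C)"
      have "insert y (T ` C) \<subseteq> W" using yW CW inv by blast
      then have "insert y (T ` C) \<subseteq> cvs.span C" using WC by (rule order_trans)
      then have "card (insert y (T ` C)) \<le> card C"
        using cvs.independent_span_bound[OF finC cvs.independent_insertI[OF ny indTC]] by blast
      moreover have "y \<notin> T ` C" using ny cvs.span_base[of y "T ` C"] by blast
      ultimately show False using finC cardTC by simp
    qed
  qed
  have "cvs.span C \<subseteq> W" unfolding WB
    by (rule cvs.span_minimal[OF CW[unfolded WB] cvs.subspace_span])
  then have "T ` cvs.span C \<subseteq> T ` W" by blast
  then show ?thesis using WTC cvs_pair.linear_span_image[OF lin] by simp
qed

lemma isometry_bounded_clop: "isometry V \<Longrightarrow> bounded_clop V"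
  by (simp add: isometry_def)

lemma adj_isometry_apply: "isometry V \<Longrightarrow> adj V (V x) = x"
  unfolding isometry_def by (metis comp_apply id_apply)

lemma norm_isometry:
  assumes "isometry V"
  shows "norm (V x) = norm x"
proof -
  have "cinner (V x) (V x) = cinner x x"
    using cinner_adj_right[OF isometry_bounded_clop[OF assms]] adj_isometry_apply[OF assms] by simp
  then have "(norm (V x))\<^sup>2 = (norm x)\<^sup>2" by (simp only: cinner_self of_real_eq_iff)
  then show ?thesis by (simp add: power2_eq_iff_nonneg)
qed

text \<open>The projection \<open>V\<^sub>i V\<^sub>i\<^sup>*\<close> of \<open>w = V\<^sub>j V\<^sub>i x\<close> is \<open>c V\<^sub>i V\<^sub>j x\<close>, which has the norm of \<open>w\<close>;
  hence \<open>w\<close> equals its projection.\<close>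

lemma isometry_commute_of_adj_relation:
  assumes Vi: "isometry Vi" and Vj: "isometry Vj" and c: "cmod c = 1"
    and rel: "\<And>x. adj Vi (Vj x) = cscale c (Vj (adj Vi x))"
  shows "Vj (Vi x) = cscale c (Vi (Vj x))"
proof -
  have bi: "bounded_clop Vi" using Vi by (rule isometry_bounded_clop)
  define w where "w = Vj (Vi x)"
  define p where "p = Vi (adj Vi w)"
  have Aw: "adj Vi w = cscale c (Vj x)" unfolding w_def rel adj_isometry_apply[OF Vi] ..
  have "adj Vi (w - p) = 0"
    unfolding p_def by (simp add: adj_isometry_apply[OF Vi] bounded_clop_diff[OF bounded_clop_adj[OF bi]])
  then have "cinner p (w - p) = 0"
    unfolding p_def cinner_adj_right[OF bi] by simp
  then have "(norm w)\<^sup>2 = (norm p)\<^sup>2 + (norm (w - p))\<^sup>2"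
    using norm_add_square[of p "w - p"] by simp
  moreover have "norm p = norm x"
    unfolding p_def norm_isometry[OF Vi] Aw norm_cscale c norm_isometry[OF Vj] by simp
  moreover have "norm w = norm x" unfolding w_def norm_isometry[OF Vi] norm_isometry[OF Vj] ..
  ultimately have "w = p" by simp
  also have "p = cscale c (Vi (Vj x))" unfolding p_def Aw bounded_clop_cscale[OF bi] ..
  finally show ?thesis unfolding w_def .
qed

lemma adj_commute_of_commute:
  assumes bi: "bounded_clop Vi" and bj: "bounded_clop Vj"
    and com: "\<And>x. Vj (Vi x) = cscale c (Vi (Vj x))"
  shows "adj Vi (adj Vj y) = cscale (cnj c) (adj Vj (adj Vi y))"
proof (rule cinner_right_ext)
  fix x
  have "cinner x (adj Vi (adj Vj y)) = cinner (Vj (Vi x)) y"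
    by (simp add: cinner_adj_right[OF bi] cinner_adj_right[OF bj])
  also have "\<dots> = c * cinner x (adj Vj (adj Vi y))"
    by (simp add: com cinner_cscale_left cinner_adj_right[OF bi] cinner_adj_right[OF bj])
  finally show "cinner x (adj Vi (adj Vj y)) = cinner x (cscale (cnj c) (adj Vj (adj Vi y)))"
    by (simp add: cinner_cscale_right)
qed

lemma unitary_of_isometry_kernel_adj_trivial:
  assumes V: "isometry V" and ker: "{x. adj V x = 0} = {0}"
  shows "unitary V"
proof -
  have "adj V (y - V (adj V y)) = 0" for y
    using V by (simp add: adj_isometry_apply isometry_def bounded_clop_adj bounded_clop_diff)
  then have "y - V (adj V y) = 0" for y using ker by blast
  then have "V \<circ> adj V = id" by (simp add: fun_eq_iff)
  then show ?thesis using V by (simp add: unitary_def isometry_def)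
qed

section \<open>Wandering vectors of pure isometries\<close>

lemma pure_isometry_wandering_vector:
  assumes P: "pure_isometry V" and D: "closed_csubspace D" and D0: "D \<noteq> {0}"
    and inv: "\<forall>x\<in>D. V x \<in> D \<and> adj V x \<in> D"
  shows "\<exists>x\<in>D. x \<noteq> 0 \<and> adj V x = 0"
proof (rule ccontr)
  assume no: "\<not> ?thesis"
  have iso: "isometry V" using P by (simp add: pure_isometry_def)
  have "D \<subseteq> V ` D"
  proof
    fix x assume xD: "x \<in> D"
    have "x - V (adj V x) \<in> D"
      using D xD inv by (blast intro: csubspace_diff[of D] dest: closed_csubspace_def[THEN iffD1])
    moreover have "adj V (x - V (adj V x)) = 0"
      using iso by (simp add: adj_isometry_apply isometry_def bounded_clop_adj bounded_clop_diff)
    ultimately have "x = V (adj V x)" using no by auto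
    then show "x \<in> V ` D" using inv xD by blast
  qed
  then have "V ` D = D" using inv by blast
  then show False using P D D0 by (simp add: pure_isometry_def)
qed

lemma pure_isometries_joint_wandering_vector:
  fixes V :: "nat \<Rightarrow> 'a::chilbert \<Rightarrow> 'a"
  assumes "finite I" and "\<forall>i\<in>I. pure_isometry (V i)"
    and "\<forall>i\<in>I. \<forall>k\<in>I. i \<noteq> k \<longrightarrow> (\<forall>x. adj (V k) x = 0 \<longrightarrow>
        adj (V k) (V i x) = 0 \<and> adj (V k) (adj (V i) x) = 0)"
    and "closed_csubspace D" and "D \<noteq> {0}"
    and "\<forall>i\<in>I. \<forall>x\<in>D. V i x \<in> D \<and> adj (V i) x \<in> D"
  shows "\<exists>x\<in>D. x \<noteq> 0 \<and> (\<forall>i\<in>I. adj (V i) x = 0)"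
  using assms
proof (induction I arbitrary: D rule: finite_induct)
  case empty
  then show ?case by (auto simp: closed_csubspace_def csubspace_def)
next
  case (insert a J)
  have Pa: "pure_isometry (V a)" using insert.prems(1) by simp
  define D' where "D' = D \<inter> {x. adj (V a) x = 0}"
  have "closed_csubspace D'"
    using Pa insert.prems(3) unfolding D'_def pure_isometry_def isometry_def
    by (blast intro: closed_csubspace_Int closed_csubspace_kernel bounded_clop_adj)
  moreover have "D' \<noteq> {0}"
    using pure_isometry_wandering_vector[OF Pa insert.prems(3,4)] insert.prems(5) unfolding D'_def
    by blast
  moreover have "\<forall>i\<in>J. \<forall>x\<in>D'. V i x \<in> D' \<and> adj (V i) x \<in> D'"
  proof (intro ballI)
    fix i x assume "i \<in> J" "x \<in> D'"
    then have "i \<in> insert a J" "i \<noteq> a" "x \<in> D" "adj (V a) x = 0"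
      using insert.hyps(2) by (auto simp: D'_def)
    then show "V i x \<in> D' \<and> adj (V i) x \<in> D'"
      using insert.prems(2)[rule_format, of i a x] insert.prems(5) by (simp add: D'_def)
  qed
  ultimately have "\<exists>x\<in>D'. x \<noteq> 0 \<and> (\<forall>i\<in>J. adj (V i) x = 0)"
    using insert.IH insert.prems(1,2) by blast
  then show ?case unfolding D'_def by auto
qed

lemma doubly_noncommuting_kernel_adj_invariant:
  assumes dn: "doubly_noncommuting n z V" and i: "i \<in> {1..n}" and k: "k \<in> {1..n}"
    and ik: "i \<noteq> k" and x: "adj (V k) x = 0"
  shows "adj (V k) (V i x) = 0" and "adj (V k) (adj (V i) x) = 0"
proof -
  have iso: "isometry (V i)" "isometry (V k)" using dn i k by (auto simp: doubly_noncommuting_def)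
  have b: "bounded_clop (V i)" "bounded_clop (V k)" "bounded_clop (adj (V i))"
    using iso by (auto simp: isometry_def bounded_clop_adj)
  have "\<forall>a\<in>{1..n}. \<forall>b\<in>{1..n}. a \<noteq> b \<longrightarrow> cmod (z a b) = 1 \<and> z b a = cnj (z a b) \<and>
      adj (V a) \<circ> V b = (\<lambda>y. cscale (cnj (z a b)) (V b (adj (V a) y)))"
    using dn unfolding doubly_noncommuting_def by (rule conjunct2)
  moreover have "k \<noteq> i" using ik by simp
  ultimately have "cmod (z k i) = 1 \<and> z i k = cnj (z k i) \<and>
      adj (V k) \<circ> V i = (\<lambda>y. cscale (cnj (z k i)) (V i (adj (V k) y)))"
    using k i by blast
  then have c: "cmod (cnj (z k i)) = 1"
    and rel: "adj (V k) (V i y) = cscale (cnj (z k i)) (V i (adj (V k) y))" for y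
    by (simp_all add: fun_eq_iff)
  have "V i (V k y) = cscale (cnj (z k i)) (V k (V i y))" for y
    by (rule isometry_commute_of_adj_relation[OF iso(2,1) c rel])
  then have "adj (V k) (adj (V i) x) = cscale (cnj (cnj (z k i))) (adj (V i) (adj (V k) x))"
    by (rule adj_commute_of_commute[OF b(2,1)])
  then show "adj (V k) (adj (V i) x) = 0" using x bounded_clop_zero[OF b(3)] by simp
  show "adj (V k) (V i x) = 0" using rel[of x] x bounded_clop_zero[OF b(1)] by simp
qed

theorem corollary3p12:
  fixes V :: "nat \<Rightarrow> 'a::chilbert \<Rightarrow> 'a" and z :: "nat \<Rightarrow> nat \<Rightarrow> complex"
    and n l :: nat
  assumes "n \<ge> 1" and "1 \<le> l" and "l \<le> n"
    and "doubly_noncommuting n z V"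
    and "\<forall>i\<in>{1..l}. pure_isometry (V i)"
    and "finite_cdim (\<Inter>i\<in>{1..l}. {x. adj (V i) x = 0})"
  shows "\<forall>i\<in>{l+1..n}. unitary (V i)"
proof
  fix j assume "j \<in> {l+1..n}"
  then have j: "j \<in> {1..n}" "j \<notin> {1..l}" using assms(2) by auto
  define W where "W = (\<Inter>i\<in>{1..l}. {x. adj (V i) x = 0})"
  have iso: "isometry (V j)" using assms(4) j by (simp add: doubly_noncommuting_def)
  note invariant = doubly_noncommuting_kernel_adj_invariant[OF assms(4)]
  have inj: "inj (V j)" by (metis injI adj_isometry_apply[OF iso])
  have "{x. adj (V j) x = 0} = {0}"
  proof (rule ccontr)
    assume "{x. adj (V j) x = 0} \<noteq> {0}"
    moreover have "closed_csubspace {x. adj (V j) x = 0}"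
      using iso by (simp add: isometry_def closed_csubspace_kernel bounded_clop_adj)
    ultimately obtain x where x: "x \<noteq> 0" "adj (V j) x = 0" "x \<in> W"
      using pure_isometries_joint_wandering_vector[of "{1..l}" V "{x. adj (V j) x = 0}"]
        assms(3,5) invariant j unfolding W_def by auto
    have "W \<subseteq> V j ` W"
      using finite_cdim_invariant_subset_image[of W "V j", OF _ _ inj] assms(3,6) invariant j iso
      unfolding W_def isometry_def by auto
    then obtain w where "w \<in> W" "x = V j w" using x(3) by blast
    then show False using x iso by (simp add: adj_isometry_apply isometry_def bounded_clop_zero)
  qed
  then show "unitary (V j)" by (rule unitary_of_isometry_kernel_adj_trivial[OF iso])
qed

end
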